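(* Let $S$ be a $\Gamma$-hemiring, let $\mu$ be a prime fuzzy h-ideal of $S$ and let $x\in S$. Then for all $y\in S$, $\langle x,\mu\rangle(y)=\inf_{s_1\in S,\ \eta,\delta\in\Gamma}\langle x\eta s_1\delta x,\mu\rangle(y)$.
   Context: A $\Gamma$-hemiring is a pair of additive commutative semigroups with zero $S$ and $\Gamma$ with a map $S\times\Gamma\times S\to S$, $(a,\alpha,b)\mapsto a\alpha b$, such that for all $a,b,c\in S$, $\alpha,\beta\in\Gamma$: $(a+b)\alpha c=a\alpha c+b\alpha c$; $a\alpha(b+c)=a\alpha b+a\alpha c$; $a(\alpha+\beta)b=a\alpha b+a\beta b$; $a\alpha(b\beta c)=(a\alpha b)\beta c$; $0\alpha a=0=a\alpha0$; $a0b=0=b0a$. A fuzzy h-ideal of $S$ is a map $\mu:S\to[0,1]$, not identically $0$, such that for all $x,y,a,b,z\in S$, $\gamma\in\Gamma$: $\mu(x+y)\ge\min\{\mu(x),\mu(y)\}$; $\mu(x\gamma y)\ge\mu(x)$ and $\mu(x\gamma y)\ge\mu(y)$; $x+a+z=b+z$ implies $\mu(x)\ge\min\{\mu(a),\mu(b)\}$. For fuzzy subsets $\sigma,\theta$, the h-product is $(\sigma\Gamma_h\theta)(x)=\sup\min\{\sigma(a_1),\sigma(a_2),\theta(b_1),\theta(b_2)\}$, the supremum over all $z,a_1,a_2,b_1,b_2\in S$, $\gamma,\delta\in\Gamma$ with $x+a_1\gamma b_1+z=a_2\delta b_2+z$, and $0$ if no such expression exists. Inclusion means pointwise $\le$.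 A fuzzy h-ideal $\mu$ is prime if it is not constant and for any fuzzy h-ideals $\sigma,\theta$, $\sigma\Gamma_h\theta\subseteq\mu$ implies $\sigma\subseteq\mu$ or $\theta\subseteq\mu$. The extension of $\mu$ by $x$ is $\langle x,\mu\rangle(y)=\inf_{s\in S,\ \alpha,\gamma\in\Gamma}\mu(x\alpha s\gamma y)$. *)

theory Defs
  imports Main "HOL.Real"
begin

definition gamma_hemiring :: "('a::comm_monoid_add \<Rightarrow> 'g::comm_monoid_add \<Rightarrow> 'a \<Rightarrow> 'a) \<Rightarrow> bool" where
  "gamma_hemiring m \<longleftrightarrow>
     (\<forall>a b c \<alpha>. m (a + b) \<alpha> c = m a \<alpha> c + m b \<alpha> c) \<and>
     (\<forall>a b c \<alpha>. m a \<alpha> (b + c) = m a \<alpha> b + m a \<alpha> c) \<and>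
     (\<forall>a b \<alpha> \<beta>. m a (\<alpha> + \<beta>) b = m a \<alpha> b + m a \<beta> b) \<and>
     (\<forall>a b c \<alpha> \<beta>. m a \<alpha> (m b \<beta> c) = m (m a \<alpha> b) \<beta> c) \<and>
     (\<forall>a \<alpha>. m 0 \<alpha> a = 0 \<and> m a \<alpha> 0 = 0) \<and>
     (\<forall>a b. m a 0 b = 0 \<and> m b 0 a = 0)"

definition fuzzy_subset :: "('a \<Rightarrow> real) \<Rightarrow> bool" where
  "fuzzy_subset \<mu> \<longleftrightarrow> (\<forall>x. 0 \<le> \<mu> x \<and> \<mu> x \<le> 1)"

definition fuzzy_h_ideal ::
  "('a::comm_monoid_add \<Rightarrow> 'g \<Rightarrow> 'a \<Rightarrow> 'a) \<Rightarrow> ('a \<Rightarrow> real) \<Rightarrow> bool" where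
  "fuzzy_h_ideal m \<mu> \<longleftrightarrow>
     fuzzy_subset \<mu> \<and> (\<exists>x. \<mu> x \<noteq> 0) \<and>
     (\<forall>x y. \<mu> (x + y) \<ge> min (\<mu> x) (\<mu> y)) \<and>
     (\<forall>x \<gamma> y. \<mu> (m x \<gamma> y) \<ge> \<mu> x \<and> \<mu> (m x \<gamma> y) \<ge> \<mu> y) \<and>
     (\<forall>x a b z. x + a + z = b + z \<longrightarrow> \<mu> x \<ge> min (\<mu> a) (\<mu> b))"

definition h_product ::
  "('a::comm_monoid_add \<Rightarrow> 'g \<Rightarrow> 'a \<Rightarrow> 'a) \<Rightarrow> ('a \<Rightarrow> real) \<Rightarrow> ('a \<Rightarrow> real) \<Rightarrow> 'a \<Rightarrow> real" where
  "h_product m \<sigma> \<theta> x =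
     (let V = {min (min (\<sigma> a1) (\<sigma> a2)) (min (\<theta> b1) (\<theta> b2)) | z a1 a2 b1 b2 \<gamma> \<delta>.
                 x + m a1 \<gamma> b1 + z = m a2 \<delta> b2 + z}
      in if V = {} then 0 else Sup V)"

definition prime_fuzzy_h_ideal ::
  "('a::comm_monoid_add \<Rightarrow> 'g \<Rightarrow> 'a \<Rightarrow> 'a) \<Rightarrow> ('a \<Rightarrow> real) \<Rightarrow> bool" where
  "prime_fuzzy_h_ideal m \<mu> \<longleftrightarrow>
     fuzzy_h_ideal m \<mu> \<and> (\<exists>x y. \<mu> x \<noteq> \<mu> y) \<and>
     (\<forall>\<sigma> \<theta>. fuzzy_h_ideal m \<sigma> \<longrightarrow> fuzzy_h_ideal m \<theta> \<longrightarrow>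
        (\<forall>x. h_product m \<sigma> \<theta> x \<le> \<mu> x) \<longrightarrow>
        (\<forall>x. \<sigma> x \<le> \<mu> x) \<or> (\<forall>x. \<theta> x \<le> \<mu> x))"

definition ext_fuzzy ::
  "('a \<Rightarrow> 'g \<Rightarrow> 'a \<Rightarrow> 'a) \<Rightarrow> 'a \<Rightarrow> ('a \<Rightarrow> real) \<Rightarrow> 'a \<Rightarrow> real" where
  "ext_fuzzy m x \<mu> y = Inf {\<mu> (m (m x \<alpha> s) \<gamma> y) | s \<alpha> \<gamma>. True}"

end

theory Submission
  imports Defs
begin

text \<open>Fix a level \<open>0 < t \<le> 1\<close> and let \<open>P = {x. t \<le> \<mu> x}\<close>. Primeness of \<mu>, tested on the
characteristic functions of crisp h-ideals scaled by \<open>t\<close>, makes \<open>P\<close> prime in the sense that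
\<open>a \<Gamma> S \<Gamma> b \<subseteq> P\<close> forces \<open>a \<in> P\<close> or \<open>b \<in> P\<close>. Now \<open>\<langle>x,\<mu>\<rangle>(y) \<ge> t\<close> says \<open>x \<Gamma> S \<Gamma> y \<subseteq> P\<close>, while
the right-hand side being \<open>\<ge> t\<close> says \<open>x \<Gamma> S \<Gamma> z \<subseteq> P\<close> for every \<open>z \<in> x \<Gamma> S \<Gamma> y\<close>; by primeness
this gives \<open>x \<in> P\<close> or \<open>z \<in> P\<close>, and either way \<open>z \<in> P\<close>. So both sides have the same lower
bounds.\<close>

definition h_closed :: "('a::comm_monoid_add \<Rightarrow> 'g \<Rightarrow> 'a \<Rightarrow> 'a) \<Rightarrow> 'a set \<Rightarrow> bool" where
  "h_closed m I \<longleftrightarrow> (\<forall>a b. a \<in> I \<longrightarrow> b \<in> I \<longrightarrow> a + b \<in> I) \<and>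
     (\<forall>a \<gamma> c. a \<in> I \<longrightarrow> m a \<gamma> c \<in> I \<and> m c \<gamma> a \<in> I) \<and>
     (\<forall>x a b z. x + a + z = b + z \<longrightarrow> a \<in> I \<longrightarrow> b \<in> I \<longrightarrow> x \<in> I)"

definition right_quotient :: "('a \<Rightarrow> 'g \<Rightarrow> 'a \<Rightarrow> 'a) \<Rightarrow> 'a set \<Rightarrow> 'a set \<Rightarrow> 'a set" where
  "right_quotient m P X = {c. \<forall>a\<in>X. \<forall>\<gamma>. m a \<gamma> c \<in> P}"

definition left_quotient :: "('a \<Rightarrow> 'g \<Rightarrow> 'a \<Rightarrow> 'a) \<Rightarrow> 'a set \<Rightarrow> 'a \<Rightarrow> 'a set" where
  "left_quotient m P b = {a. \<forall>\<eta> s \<delta>. m (m a \<eta> s) \<delta> b \<in> P}"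

lemma fuzzy_h_ideal_le_one: "fuzzy_h_ideal m \<mu> \<Longrightarrow> \<mu> x \<le> 1"
  and fuzzy_h_ideal_nonneg: "fuzzy_h_ideal m \<mu> \<Longrightarrow> 0 \<le> \<mu> x"
  and fuzzy_h_ideal_mult_left: "fuzzy_h_ideal m \<mu> \<Longrightarrow> \<mu> x \<le> \<mu> (m x \<gamma> y)"
  unfolding fuzzy_h_ideal_def fuzzy_subset_def by auto

lemma prime_fuzzy_h_ideal_fuzzy_h_ideal: "prime_fuzzy_h_ideal m \<mu> \<Longrightarrow> fuzzy_h_ideal m \<mu>"
  unfolding prime_fuzzy_h_ideal_def by blast

lemma h_closed_level_set:
  assumes "fuzzy_h_ideal m \<mu>"
  shows "h_closed m {x. t \<le> \<mu> x}"
  using assms unfolding h_closed_def fuzzy_h_ideal_def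
  by (smt (verit, best) mem_Collect_eq)

lemma fuzzy_h_ideal_scaled_indicator:
  assumes "I \<noteq> {}" "h_closed m I" "0 < t" "t \<le> (1::real)"
  shows "fuzzy_h_ideal m (\<lambda>w. if w \<in> I then t else 0)"
  using assms unfolding fuzzy_h_ideal_def fuzzy_subset_def h_closed_def
  by (auto simp: min_def) (metis)

lemma h_product_scaled_indicators_le:
  assumes \<mu>: "fuzzy_h_ideal m \<mu>" and "0 < t"
    and cross: "\<And>a c \<gamma>. a \<in> I \<Longrightarrow> c \<in> K \<Longrightarrow> t \<le> \<mu> (m a \<gamma> c)"
  shows "h_product m (\<lambda>w. if w \<in> I then t else 0) (\<lambda>w. if w \<in> K then t else 0) w \<le> \<mu> w"
proof -
  note nonneg = fuzzy_h_ideal_nonneg[OF \<mu>]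
  have h_closed: "\<And>x a b z. x + a + z = b + z \<Longrightarrow> min (\<mu> a) (\<mu> b) \<le> \<mu> x"
    using \<mu> unfolding fuzzy_h_ideal_def by blast
  define \<chi>I where "\<chi>I = (\<lambda>w. if w \<in> I then t else 0)"
  define \<chi>K where "\<chi>K = (\<lambda>w. if w \<in> K then t else 0)"
  have "min (min (\<chi>I a1) (\<chi>I a2)) (min (\<chi>K b1) (\<chi>K b2)) \<le> \<mu> w"
    if "w + m a1 \<gamma> b1 + z = m a2 \<delta> b2 + z" for z a1 a2 b1 b2 \<gamma> \<delta>
  proof (cases "a1 \<in> I \<and> a2 \<in> I \<and> b1 \<in> K \<and> b2 \<in> K")
    case True
    then show ?thesis
      using h_closed[OF that] cross[of a1 b1 \<gamma>] cross[of a2 b2 \<delta>] by (auto simp: \<chi>I_def \<chi>K_def)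
  next
    case False
    then have "min (min (\<chi>I a1) (\<chi>I a2)) (min (\<chi>K b1) (\<chi>K b2)) \<le> 0"
      by (auto simp: \<chi>I_def \<chi>K_def min_le_iff_disj)
    then show ?thesis using nonneg[of w] by linarith
  qed
  then show ?thesis
    unfolding h_product_def Let_def \<chi>I_def[symmetric] \<chi>K_def[symmetric]
    using nonneg[of w] by (auto intro: cSup_least)
qed

lemma prime_level_set_h_closed_sets:
  assumes prime: "prime_fuzzy_h_ideal m \<mu>" and t: "0 < t" "t \<le> 1"
    and I: "I \<noteq> {}" "h_closed m I" and K: "K \<noteq> {}" "h_closed m K"
    and cross: "\<And>a c \<gamma>. a \<in> I \<Longrightarrow> c \<in> K \<Longrightarrow> t \<le> \<mu> (m a \<gamma> c)"
  shows "(\<forall>a\<in>I. t \<le> \<mu> a) \<or> (\<forall>c\<in>K. t \<le> \<mu> c)"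
proof -
  have \<mu>: "fuzzy_h_ideal m \<mu>" by (rule prime_fuzzy_h_ideal_fuzzy_h_ideal[OF prime])
  have "(\<forall>w. (if w \<in> I then t else 0) \<le> \<mu> w) \<or> (\<forall>w. (if w \<in> K then t else 0) \<le> \<mu> w)"
    using prime fuzzy_h_ideal_scaled_indicator[OF I t] fuzzy_h_ideal_scaled_indicator[OF K t]
      h_product_scaled_indicators_le[OF \<mu> t(1) cross]
    unfolding prime_fuzzy_h_ideal_def by blast
  then show ?thesis by (metis (full_types))
qed

lemma le_ext_fuzzy_iff:
  assumes "fuzzy_h_ideal m \<mu>"
  shows "t \<le> ext_fuzzy m x \<mu> y \<longleftrightarrow> (\<forall>\<alpha> s \<gamma>. t \<le> \<mu> (m (m x \<alpha> s) \<gamma> y))"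
proof -
  have "bdd_below {\<mu> (m (m x \<alpha> s) \<gamma> y) | s \<alpha> \<gamma>. True}"
    using fuzzy_h_ideal_nonneg[OF assms] by (intro bdd_belowI[of _ 0]) auto
  then show ?thesis unfolding ext_fuzzy_def by (subst le_cInf_iff) auto
qed

context
  fixes m :: "'a::comm_monoid_add \<Rightarrow> 'g::comm_monoid_add \<Rightarrow> 'a \<Rightarrow> 'a"
  assumes gamma_hemiring: "gamma_hemiring m"
begin

lemma gamma_add_left: "m (a + b) \<alpha> c = m a \<alpha> c + m b \<alpha> c"
  using gamma_hemiring unfolding gamma_hemiring_def by auto

lemma gamma_add_right: "m a \<alpha> (b + c) = m a \<alpha> b + m a \<alpha> c"
  using gamma_hemiring unfolding gamma_hemiring_def by auto

lemma gamma_assoc: "m a \<alpha> (m b \<beta> c) = m (m a \<alpha> b) \<beta> c"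
  using gamma_hemiring unfolding gamma_hemiring_def by auto

lemma h_closed_right_quotient:
  assumes P: "h_closed m P" and X: "\<And>a \<gamma> c. a \<in> X \<Longrightarrow> m a \<gamma> c \<in> X"
  shows "h_closed m (right_quotient m P X)"
proof -
  have P_add: "\<And>u v. u \<in> P \<Longrightarrow> v \<in> P \<Longrightarrow> u + v \<in> P"
    and P_mult: "\<And>u \<gamma> v. u \<in> P \<Longrightarrow> m u \<gamma> v \<in> P"
    and P_h: "\<And>x a b z. x + a + z = b + z \<Longrightarrow> a \<in> P \<Longrightarrow> b \<in> P \<Longrightarrow> x \<in> P"
    using P unfolding h_closed_def by blast+
  show ?thesis unfolding h_closed_def right_quotient_def mem_Collect_eq
  proof (intro conjI allI impI ballI)
    fix x y a \<gamma> assume "\<forall>a\<in>X. \<forall>\<gamma>. m a \<gamma> x \<in> P" "\<forall>a\<in>X. \<forall>\<gamma>. m a \<gamma> y \<in> P" "a \<in> X"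
    then show "m a \<gamma> (x + y) \<in> P" by (simp add: gamma_add_right P_add)
  next
    fix c \<gamma> d a \<beta> assume "\<forall>a\<in>X. \<forall>\<gamma>. m a \<gamma> c \<in> P" "a \<in> X"
    then show "m a \<beta> (m c \<gamma> d) \<in> P" by (simp add: gamma_assoc P_mult)
  next
    fix c \<gamma> d a \<beta> assume "\<forall>a\<in>X. \<forall>\<gamma>. m a \<gamma> c \<in> P" "a \<in> X"
    then show "m a \<beta> (m d \<gamma> c) \<in> P" by (simp add: gamma_assoc X)
  next
    fix x b c z a \<gamma> assume eq: "x + b + z = c + z"
      and "\<forall>a\<in>X. \<forall>\<gamma>. m a \<gamma> b \<in> P" "\<forall>a\<in>X. \<forall>\<gamma>. m a \<gamma> c \<in> P" "a \<in> X"
    moreover have "m a \<gamma> x + m a \<gamma> b + m a \<gamma> z = m a \<gamma> c + m a \<gamma> z"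
      using arg_cong[OF eq, of "m a \<gamma>"] by (simp add: gamma_add_right)
    ultimately show "m a \<gamma> x \<in> P" using P_h by blast
  qed
qed

lemma h_closed_left_quotient:
  assumes P: "h_closed m P"
  shows "h_closed m (left_quotient m P b)"
proof -
  have P_add: "\<And>u v. u \<in> P \<Longrightarrow> v \<in> P \<Longrightarrow> u + v \<in> P"
    and P_mult: "\<And>u \<gamma> v. u \<in> P \<Longrightarrow> m v \<gamma> u \<in> P"
    and P_h: "\<And>x a b z. x + a + z = b + z \<Longrightarrow> a \<in> P \<Longrightarrow> b \<in> P \<Longrightarrow> x \<in> P"
    using P unfolding h_closed_def by blast+
  show ?thesis unfolding h_closed_def left_quotient_def mem_Collect_eq
  proof (intro conjI allI impI)
    fix x y \<eta> s \<delta> assume "\<forall>\<eta> s \<delta>. m (m x \<eta> s) \<delta> b \<in> P" "\<forall>\<eta> s \<delta>. m (m y \<eta> s) \<delta> b \<in> P"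
    then show "m (m (x + y) \<eta> s) \<delta> b \<in> P" by (simp add: gamma_add_left P_add)
  next
    fix a \<gamma> c \<eta> s \<delta> assume "\<forall>\<eta> s \<delta>. m (m a \<eta> s) \<delta> b \<in> P"
    then have "m (m a \<gamma> (m c \<eta> s)) \<delta> b \<in> P" by blast
    then show "m (m (m a \<gamma> c) \<eta> s) \<delta> b \<in> P" by (simp add: gamma_assoc)
  next
    fix a \<gamma> c \<eta> s \<delta> assume "\<forall>\<eta> s \<delta>. m (m a \<eta> s) \<delta> b \<in> P"
    then have "m c \<gamma> (m (m a \<eta> s) \<delta> b) \<in> P" by (simp add: P_mult)
    then show "m (m (m c \<gamma> a) \<eta> s) \<delta> b \<in> P" by (simp add: gamma_assoc)
  next
    fix x a c z \<eta> s \<delta> assume eq: "x + a + z = c + z"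
      and "\<forall>\<eta> s \<delta>. m (m a \<eta> s) \<delta> b \<in> P" "\<forall>\<eta> s \<delta>. m (m c \<eta> s) \<delta> b \<in> P"
    moreover have "m (m x \<eta> s) \<delta> b + m (m a \<eta> s) \<delta> b + m (m z \<eta> s) \<delta> b
          = m (m c \<eta> s) \<delta> b + m (m z \<eta> s) \<delta> b"
      using arg_cong[OF eq, of "\<lambda>u. m (m u \<eta> s) \<delta> b"] by (simp add: gamma_add_left)
    ultimately show "m (m x \<eta> s) \<delta> b \<in> P" using P_h by blast
  qed
qed

lemma prime_level_set_right_quotient:
  assumes prime: "prime_fuzzy_h_ideal m \<mu>" and t: "0 < t" "t \<le> 1"
    and X: "X \<noteq> {}" "h_closed m X"
    and Q: "right_quotient m {x. t \<le> \<mu> x} X \<noteq> {}"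
  shows "X \<subseteq> {x. t \<le> \<mu> x} \<or> right_quotient m {x. t \<le> \<mu> x} X \<subseteq> {x. t \<le> \<mu> x}"
proof -
  have \<mu>: "fuzzy_h_ideal m \<mu>" by (rule prime_fuzzy_h_ideal_fuzzy_h_ideal[OF prime])
  have "h_closed m (right_quotient m {x. t \<le> \<mu> x} X)"
    using X(2) by (intro h_closed_right_quotient h_closed_level_set[OF \<mu>]) (auto simp: h_closed_def)
  from prime_level_set_h_closed_sets[OF prime t X Q this] show ?thesis
    unfolding right_quotient_def by auto
qed

lemma prime_level_set_mult_right:
  assumes prime: "prime_fuzzy_h_ideal m \<mu>" and t: "0 < t" "t \<le> 1"
    and b: "\<And>s \<delta>. t \<le> \<mu> (m s \<delta> b)"
  shows "t \<le> \<mu> b"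
proof -
  have "b \<in> right_quotient m {x. t \<le> \<mu> x} UNIV"
    using b unfolding right_quotient_def by simp
  with prime_level_set_right_quotient[OF prime t, of UNIV] show ?thesis
    by (auto simp: h_closed_def)
qed

lemma prime_level_set_sandwich:
  assumes prime: "prime_fuzzy_h_ideal m \<mu>" and t: "0 < t" "t \<le> 1"
    and ab: "\<And>\<eta> s \<delta>. t \<le> \<mu> (m (m a \<eta> s) \<delta> b)"
  shows "t \<le> \<mu> a \<or> t \<le> \<mu> b"
proof -
  have \<mu>: "fuzzy_h_ideal m \<mu>" by (rule prime_fuzzy_h_ideal_fuzzy_h_ideal[OF prime])
  define P where "P = {x. t \<le> \<mu> x}"
  define I where "I = left_quotient m P b"
  have a: "a \<in> I" using ab unfolding I_def P_def left_quotient_def by simp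
  have Sb: "m s \<delta> b \<in> right_quotient m P I" for s \<delta>
    unfolding right_quotient_def I_def left_quotient_def by (simp add: gamma_assoc)
  have "h_closed m I"
    unfolding I_def P_def by (rule h_closed_left_quotient[OF h_closed_level_set[OF \<mu>]])
  with prime_level_set_right_quotient[OF prime t, of I] a Sb
  have "I \<subseteq> P \<or> right_quotient m P I \<subseteq> P" unfolding P_def by blast
  then show ?thesis
  proof
    assume "I \<subseteq> P" with a show ?thesis unfolding P_def by auto
  next
    assume "right_quotient m P I \<subseteq> P"
    with Sb have "t \<le> \<mu> (m s \<delta> b)" for s \<delta> unfolding P_def by auto
    with prime_level_set_mult_right[OF prime t] show ?thesis by blast
  qed
qed

lemma le_ext_fuzzy_sandwich_iff:
  assumes prime: "prime_fuzzy_h_ideal m \<mu>"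
  shows "(\<forall>s1 \<eta> \<delta>. t \<le> ext_fuzzy m (m (m x \<eta> s1) \<delta> x) \<mu> y) \<longleftrightarrow> t \<le> ext_fuzzy m x \<mu> y"
proof -
  have \<mu>: "fuzzy_h_ideal m \<mu>" by (rule prime_fuzzy_h_ideal_fuzzy_h_ideal[OF prime])
  have shift: "m (m (m (m x \<eta> s1) \<delta> x) \<alpha> s) \<gamma> y = m (m x \<eta> s1) \<delta> (m (m x \<alpha> s) \<gamma> y)"
    for \<eta> s1 \<delta> \<alpha> s \<gamma> by (simp add: gamma_assoc)
  have down: "t \<le> \<mu> (m (m x \<alpha> s) \<gamma> y)"
    if sandwich: "\<And>\<eta> s1 \<delta>. t \<le> \<mu> (m (m x \<eta> s1) \<delta> (m (m x \<alpha> s) \<gamma> y))" for \<alpha> s \<gamma>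
  proof (cases "t \<le> 0")
    case True then show ?thesis using fuzzy_h_ideal_nonneg[OF \<mu>] order.trans by blast
  next
    case False
    have "t \<le> 1" using sandwich[of 0 0 0] fuzzy_h_ideal_le_one[OF \<mu>] order.trans by blast
    with False prime_level_set_sandwich[OF prime _ _ sandwich]
    have "t \<le> \<mu> x \<or> t \<le> \<mu> (m (m x \<alpha> s) \<gamma> y)" by simp
    then show ?thesis
      using fuzzy_h_ideal_mult_left[OF \<mu>] by (meson order.trans)
  qed
  have up: "t \<le> \<mu> (m (m x \<eta> s1) \<delta> (m (m x \<alpha> s) \<gamma> y))"
    if "\<forall>\<alpha> s \<gamma>. t \<le> \<mu> (m (m x \<alpha> s) \<gamma> y)" for \<eta> s1 \<delta> \<alpha> s \<gamma>
    using that[rule_format, of \<eta> "m (m s1 \<delta> x) \<alpha> s" \<gamma>] by (simp add: gamma_assoc)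
  show ?thesis
    unfolding le_ext_fuzzy_iff[OF \<mu>] shift
  proof (intro iffI allI)
    fix \<alpha> s \<gamma>
    assume "\<forall>s1 \<eta> \<delta> \<alpha> s \<gamma>. t \<le> \<mu> (m (m x \<eta> s1) \<delta> (m (m x \<alpha> s) \<gamma> y))"
    then show "t \<le> \<mu> (m (m x \<alpha> s) \<gamma> y)" by (intro down) blast
  qed (rule up)
qed

end

theorem proposition3p18:
  fixes m :: "'a::comm_monoid_add \<Rightarrow> 'g::comm_monoid_add \<Rightarrow> 'a \<Rightarrow> 'a"
    and \<mu> :: "'a \<Rightarrow> real" and x :: 'a
  assumes "gamma_hemiring m"
    and "prime_fuzzy_h_ideal m \<mu>"
  shows "\<forall>y. ext_fuzzy m x \<mu> y =
           Inf {ext_fuzzy m (m (m x \<eta> s1) \<delta> x) \<mu> y | s1 \<eta> \<delta>. True}"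
proof
  fix y
  have \<mu>: "fuzzy_h_ideal m \<mu>" by (rule prime_fuzzy_h_ideal_fuzzy_h_ideal[OF assms(2)])
  let ?R = "{ext_fuzzy m (m (m x \<eta> s1) \<delta> x) \<mu> y | s1 \<eta> \<delta>. True}"
  have "0 \<le> ext_fuzzy m a \<mu> y" for a
    using le_ext_fuzzy_iff[OF \<mu>] fuzzy_h_ideal_nonneg[OF \<mu>] by blast
  then have "bdd_below ?R" by (intro bdd_belowI[of _ 0]) auto
  then have "t \<le> Inf ?R \<longleftrightarrow> t \<le> ext_fuzzy m x \<mu> y" for t
    using le_ext_fuzzy_sandwich_iff[OF assms, of t x y] by (subst le_cInf_iff) auto
  then show "ext_fuzzy m x \<mu> y = Inf ?R"
    by (meson order.antisym order.refl)
qed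

end
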